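(* Let $p_1,\dots,p_m\in[0,1]$ and let $(\ell_{i:n})_{0\le i\le n\le m}$ be reals with $\ell_{0:n}=-1$ for all $n$, such that $n\mapsto\ell_{i:n}$ is nonincreasing and $i\mapsto\ell_{i:n}$ is nondecreasing. For $A\subseteq\{1,\dots,m\}$ and $t\in[0,1]$ set $\varphi_{A,t}=\mathbf 1\{t\le\ell_{i_A(t):|A|}\}$. Then for all $S\subseteq\{1,\dots,m\}$, $n\in\{0,\dots,|S|\}$, $t\in[0,1]$, $$\varphi_{S,n,t}=\min_{0\le k\le i_{S^c}(t)}\mathbf 1\Big\{t\le\ell_{\left((n+i_S(t)-|S|)\vee0+k\right):\left(n+m-|S|-i_{S^c}(t)+k\right)}\Big\}.$$ In particular $\varphi_{\{1,\dots,m\},n,t}=\mathbf 1\{t\le\ell_{((n+i(t)-m)\vee 0):n}\}$.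
   Context: $i_A(t)=\sum_{j\in A}\mathbf 1\{p_j\le t\}$, $i(t)=i_{\{1,\dots,m\}}(t)$, $S^c=\{1,\dots,m\}\setminus S$. $\varphi_{S,n,t}=\min\{\varphi_{A,t}: A\subseteq\{1,\dots,m\},\ |A\cap S|=n\}$. *)

theory Defs
  imports Complex_Main
begin

definition cnt :: "(nat \<Rightarrow> real) \<Rightarrow> nat set \<Rightarrow> real \<Rightarrow> nat" where
  "cnt p A t = card {j \<in> A. p j \<le> t}"

definition phiA :: "(nat \<Rightarrow> real) \<Rightarrow> (nat \<Rightarrow> nat \<Rightarrow> real) \<Rightarrow> nat set \<Rightarrow> real \<Rightarrow> nat" where
  "phiA p l A t = (if t \<le> l (cnt p A t) (card A) then 1 else 0)"

definition phiSn :: "nat \<Rightarrow> (nat \<Rightarrow> real) \<Rightarrow> (nat \<Rightarrow> nat \<Rightarrow> real) \<Rightarrow> nat set \<Rightarrow> nat \<Rightarrow> real \<Rightarrow> nat" where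
  "phiSn m p l S n t = Min {phiA p l A t | A. A \<subseteq> {1..m} \<and> card (A \<inter> S) = n}"

end

theory Submission
  imports Defs
begin

text \<open>Split \<open>{1..m}\<close> by \<open>S\<close> and by the rejection set \<open>P = {j. p j \<le> t}\<close>. Writing \<open>k = |A \<inter> P - S|\<close>, such an \<open>A\<close>
  contains at least \<open>(n + i\<^sub>S(t) - |S|) \<or> 0\<close> rejected points of \<open>S\<close> and at most all
  \<open>|S\<^sup>c - P|\<close> unrejected points outside \<open>S\<close>, so by the monotonicity of \<open>l\<close> its threshold
  dominates the one at the index pair \<open>((n + i\<^sub>S(t) - |S|) \<or> 0 + k, n + |S\<^sup>c - P| + k)\<close>.
  Conversely every such extremal pair with \<open>k \<le> i\<^sub>S\<^sub>c(t)\<close> is attained by some \<open>A\<close>, so a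
  failing \<open>A\<close> exists iff a failing \<open>k\<close> does.\<close>

lemma Min_indicator_image:
  assumes "X \<noteq> {}"
  shows "Min ((\<lambda>x. if Q x then 1 else 0::nat) ` X) = (if \<forall>x\<in>X. Q x then 1 else 0)"
proof -
  have fin: "finite ((\<lambda>x. if Q x then 1 else 0::nat) ` X)"
    by (rule finite_subset[of _ "{0, 1}"]) auto
  show ?thesis
  proof (cases "\<forall>x\<in>X. Q x")
    case True
    then have "(\<lambda>x. if Q x then 1 else 0::nat) ` X = {1}" using assms by auto
    then show ?thesis using True by simp
  next
    case False
    then have "0 \<in> (\<lambda>x. if Q x then 1 else 0::nat) ` X" by force
    then show ?thesis using False fin by (metis Min_le le_zero_eq)
  qed
qed

lemma cnt_eq_card_Int: "cnt p A t = card (A \<inter> {j. p j \<le> t})"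
  unfolding cnt_def by (metis Collect_conj_eq Collect_mem_eq)

lemma exists_subset_with_counts:
  assumes "finite U" "S \<subseteq> U" "n \<le> card S" "k \<le> card ((U - S) \<inter> P)"
  shows "\<exists>A \<subseteq> U. card (A \<inter> S) = n \<and> card (A \<inter> P) = n + card (S \<inter> P) - card S + k
                  \<and> card A = n + card (U - S - P) + k"
proof -
  define d where "d = n + card (S \<inter> P) - card S"
  have finS: "finite S" using assms(1,2) finite_subset by blast
  have cS: "card S = card (S \<inter> P) + card (S - P)" using card_Int_Diff[OF finS] .
  have "d \<le> card (S \<inter> P)" "n - d \<le> card (S - P)" using assms(3) cS by (auto simp: d_def)
  then obtain B1 B0 where B1: "B1 \<subseteq> S \<inter> P" "card B1 = d" "finite B1"
    and B0: "B0 \<subseteq> S - P" "card B0 = n - d" "finite B0"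
    by (metis obtain_subset_with_card_n)
  obtain K where K: "K \<subseteq> (U - S) \<inter> P" "card K = k" "finite K"
    using assms(4) by (rule obtain_subset_with_card_n)
  have "d \<le> n" using cS by (simp add: d_def)
  have cB: "card (B1 \<union> B0) = n"
    using B1 B0 \<open>d \<le> n\<close> by (subst card_Un_disjoint) auto
  have cBK: "card (B1 \<union> K) = d + k"
    using B1 K by (subst card_Un_disjoint) auto
  have cBBK: "card (B1 \<union> B0 \<union> K) = n + k"
    using B1 B0 K cB by (subst card_Un_disjoint) auto
  define A where "A = B1 \<union> B0 \<union> K \<union> (U - S - P)"
  have "A \<inter> S = B1 \<union> B0" "A \<inter> P = B1 \<union> K" "A \<subseteq> U"
    using B1 B0 K assms(2) unfolding A_def by blast+
  moreover have "card A = n + card (U - S - P) + k"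
    unfolding A_def using B1 B0 K assms(1) cBBK by (subst card_Un_disjoint) auto
  ultimately show ?thesis using cB cBK unfolding d_def by auto
qed

lemma subset_counts_bounds:
  fixes P :: "'a set"
  assumes "finite U" "S \<subseteq> U" "A \<subseteq> U"
  defines "k \<equiv> card (A \<inter> ((U - S) \<inter> P))"
  shows "k \<le> card ((U - S) \<inter> P)"
    and "card (A \<inter> S) + card (S \<inter> P) - card S + k \<le> card (A \<inter> P)"
    and "card (A \<inter> P) \<le> card A"
    and "card A \<le> card (A \<inter> S) + card (U - S - P) + k"
    and "card (A \<inter> S) + card (U - S - P) + k \<le> card U"
proof -
  have finS: "finite S" and finA: "finite A" using assms(1-3) finite_subset by blast+
  have AS: "card (A \<inter> S) = card (A \<inter> S \<inter> P) + card (A \<inter> S - P)"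
    by (rule card_Int_Diff) (simp add: finA)
  have AP: "card (A \<inter> P) = card (A \<inter> S \<inter> P) + k"
  proof -
    have "card (A \<inter> P) = card (A \<inter> P \<inter> S) + card (A \<inter> P - S)"
      by (rule card_Int_Diff) (simp add: finA)
    moreover have "A \<inter> P \<inter> S = A \<inter> S \<inter> P" "A \<inter> P - S = A \<inter> ((U - S) \<inter> P)"
      using assms(3) by blast+
    ultimately show ?thesis unfolding k_def by simp
  qed
  have A: "card A = card (A \<inter> S) + k + card (A \<inter> (U - S - P))"
  proof -
    have "card A = card (A \<inter> S) + card (A - S)" by (rule card_Int_Diff[OF finA])
    moreover have "card (A - S) = card ((A - S) \<inter> P) + card (A - S - P)"
      by (rule card_Int_Diff) (simp add: finA)
    moreover have "(A - S) \<inter> P = A \<inter> ((U - S) \<inter> P)" "A - S - P = A \<inter> (U - S - P)"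
      using assms(3) by blast+
    ultimately show ?thesis unfolding k_def by simp
  qed
  have U: "card U = card S + card ((U - S) \<inter> P) + card (U - S - P)"
    using card_Int_Diff[of "U - S" P] card_Diff_subset[OF finS assms(2)] card_mono[OF assms(1,2)]
      assms(1) by simp
  have "card (A \<inter> S - P) \<le> card (S - P)" by (rule card_mono) (use finS in auto)
  moreover have "card S = card (S \<inter> P) + card (S - P)" by (rule card_Int_Diff[OF finS])
  ultimately show "card (A \<inter> S) + card (S \<inter> P) - card S + k \<le> card (A \<inter> P)"
    using AS AP by linarith
  show "card (A \<inter> P) \<le> card A" by (rule card_mono[OF finA]) blast
  show "k \<le> card ((U - S) \<inter> P)" unfolding k_def by (rule card_mono) (use assms(1) in auto)
  have "card (A \<inter> (U - S - P)) \<le> card (U - S - P)" by (rule card_mono) (use assms(1) in auto)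
  then show "card A \<le> card (A \<inter> S) + card (U - S - P) + k" using A by linarith
  have "card (A \<inter> S) \<le> card S" by (rule card_mono) (use finS in auto)
  then show "card (A \<inter> S) + card (U - S - P) + k \<le> card U"
    using U \<open>k \<le> card ((U - S) \<inter> P)\<close> by linarith
qed

lemma monotone_table_le:
  fixes l :: "nat \<Rightarrow> nat \<Rightarrow> real"
  assumes mono_n: "\<And>i n n'. i \<le> n \<Longrightarrow> n \<le> n' \<Longrightarrow> n' \<le> m \<Longrightarrow> l i n' \<le> l i n"
    and mono_i: "\<And>i i' n. i \<le> i' \<Longrightarrow> i' \<le> n \<Longrightarrow> n \<le> m \<Longrightarrow> l i n \<le> l i' n"
    and "i \<le> i'" "i' \<le> n'" "n' \<le> n" "n \<le> m"
  shows "l i n \<le> l i' n'"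
proof -
  have "i' \<le> n" using assms(4,5) by (rule order_trans)
  then have "l i n \<le> l i' n" using assms(3,6) by (intro mono_i)
  also have "\<dots> \<le> l i' n'" using assms(4-6) by (intro mono_n)
  finally show ?thesis .
qed

lemma phiSn_eq_indicator:
  assumes "S \<subseteq> {1..m}" "n \<le> card S"
  shows "phiSn m p l S n t =
    (if \<forall>A. A \<subseteq> {1..m} \<and> card (A \<inter> S) = n \<longrightarrow> t \<le> l (cnt p A t) (card A) then 1 else 0)"
proof -
  obtain A where "A \<subseteq> S" "card A = n" using assms(2) by (rule obtain_subset_with_card_n)
  then have "A \<in> {A. A \<subseteq> {1..m} \<and> card (A \<inter> S) = n}" using assms(1) by (auto simp: Int_absorb2)
  then show ?thesis
    unfolding phiSn_def phiA_def setcompr_eq_image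
    by (subst Min_indicator_image) auto
qed

lemma failing_subset_iff_failing_index:
  fixes p :: "nat \<Rightarrow> real" and t :: real and l :: "nat \<Rightarrow> nat \<Rightarrow> real"
  assumes mono_n: "\<And>i n n'. i \<le> n \<Longrightarrow> n \<le> n' \<Longrightarrow> n' \<le> m \<Longrightarrow> l i n' \<le> l i n"
    and mono_i: "\<And>i i' n. i \<le> i' \<Longrightarrow> i' \<le> n \<Longrightarrow> n \<le> m \<Longrightarrow> l i n \<le> l i' n"
    and S: "S \<subseteq> {1..m}" and n: "n \<le> card S"
  defines "P \<equiv> {j. p j \<le> t}"
  shows "(\<exists>A. A \<subseteq> {1..m} \<and> card (A \<inter> S) = n \<and> \<not> t \<le> l (cnt p A t) (card A)) \<longleftrightarrow>
    (\<exists>k \<le> cnt p ({1..m} - S) t.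
       \<not> t \<le> l (n + cnt p S t - card S + k) (n + card ({1..m} - S - P) + k))"
proof
  assume "\<exists>A. A \<subseteq> {1..m} \<and> card (A \<inter> S) = n \<and> \<not> t \<le> l (cnt p A t) (card A)"
  then obtain A where A: "A \<subseteq> {1..m}" "card (A \<inter> S) = n" "\<not> t \<le> l (cnt p A t) (card A)"
    by blast
  define k where "k = card (A \<inter> (({1..m} - S) \<inter> P))"
  note bounds = subset_counts_bounds[OF finite_atLeastAtMost S A(1), of P, folded k_def, unfolded A(2)]
  have "l (n + cnt p S t - card S + k) (n + card ({1..m} - S - P) + k) \<le> l (cnt p A t) (card A)"
    using bounds by (intro monotone_table_le[OF mono_n mono_i]) (auto simp: cnt_eq_card_Int P_def)
  then show "\<exists>k \<le> cnt p ({1..m} - S) t.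
      \<not> t \<le> l (n + cnt p S t - card S + k) (n + card ({1..m} - S - P) + k)"
    using A(3) bounds(1) by (auto simp: cnt_eq_card_Int P_def intro!: exI[of _ k])
next
  assume "\<exists>k \<le> cnt p ({1..m} - S) t.
      \<not> t \<le> l (n + cnt p S t - card S + k) (n + card ({1..m} - S - P) + k)"
  then obtain k where "k \<le> card (({1..m} - S) \<inter> P)"
    and k: "\<not> t \<le> l (n + cnt p S t - card S + k) (n + card ({1..m} - S - P) + k)"
    by (auto simp: cnt_eq_card_Int P_def)
  then obtain A where "A \<subseteq> {1..m}" "card (A \<inter> S) = n"
    "cnt p A t = n + cnt p S t - card S + k" "card A = n + card ({1..m} - S - P) + k"
    using exists_subset_with_counts[OF finite_atLeastAtMost S n] by (auto simp: cnt_eq_card_Int P_def)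
  with k show "\<exists>A. A \<subseteq> {1..m} \<and> card (A \<inter> S) = n \<and> \<not> t \<le> l (cnt p A t) (card A)"
    by auto
qed

lemma phiSn_eq_Min_table:
  fixes p :: "nat \<Rightarrow> real" and t :: real and l :: "nat \<Rightarrow> nat \<Rightarrow> real"
  assumes mono_n: "\<And>i n n'. i \<le> n \<Longrightarrow> n \<le> n' \<Longrightarrow> n' \<le> m \<Longrightarrow> l i n' \<le> l i n"
    and mono_i: "\<And>i i' n. i \<le> i' \<Longrightarrow> i' \<le> n \<Longrightarrow> n \<le> m \<Longrightarrow> l i n \<le> l i' n"
    and S: "S \<subseteq> {1..m}" and n: "n \<le> card S"
  shows "phiSn m p l S n t =
    Min ((\<lambda>k. if t \<le> l (nat (int n + int (cnt p S t) - int (card S)) + k)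
                        (n + m - card S - cnt p ({1..m} - S) t + k) then 1 else 0)
         ` {0..cnt p ({1..m} - S) t})"
proof -
  let ?P = "{j. p j \<le> t}"
  have "card S \<le> m" using card_mono[OF _ S] by simp
  moreover have "card ({1..m} - S) = cnt p ({1..m} - S) t + card ({1..m} - S - ?P)"
    unfolding cnt_eq_card_Int by (rule card_Int_Diff) simp
  moreover have "card ({1..m} - S) = m - card S"
    using S by (simp add: card_Diff_subset finite_subset)
  ultimately have "n + m - card S - cnt p ({1..m} - S) t = n + card ({1..m} - S - ?P)"
    by linarith
  moreover have "nat (int n + int (cnt p S t) - int (card S)) = n + cnt p S t - card S"
    by linarith
  moreover have "(\<exists>A. A \<subseteq> {1..m} \<and> card (A \<inter> S) = n \<and> \<not> t \<le> l (cnt p A t) (card A)) \<longleftrightarrow>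
    (\<exists>k \<le> cnt p ({1..m} - S) t.
       \<not> t \<le> l (n + cnt p S t - card S + k) (n + card ({1..m} - S - ?P) + k))"
    by (rule failing_subset_iff_failing_index[OF mono_n mono_i S n])
  ultimately show ?thesis
    unfolding phiSn_eq_indicator[OF S n] by (subst Min_indicator_image) auto
qed

theorem mainTheorem7:
  fixes m :: nat and p :: "nat \<Rightarrow> real" and l :: "nat \<Rightarrow> nat \<Rightarrow> real"
  assumes p01: "\<And>j. j \<in> {1..m} \<Longrightarrow> 0 \<le> p j \<and> p j \<le> 1"
    and l0: "\<And>n. n \<le> m \<Longrightarrow> l 0 n = -1"
    and mono_n: "\<And>i n n'. i \<le> n \<Longrightarrow> n \<le> n' \<Longrightarrow> n' \<le> m \<Longrightarrow> l i n' \<le> l i n"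
    and mono_i: "\<And>i i' n. i \<le> i' \<Longrightarrow> i' \<le> n \<Longrightarrow> n \<le> m \<Longrightarrow> l i n \<le> l i' n"
  shows "(\<forall>S n t. S \<subseteq> {1..m} \<longrightarrow> n \<le> card S \<longrightarrow> 0 \<le> t \<longrightarrow> t \<le> 1 \<longrightarrow>
            phiSn m p l S n t =
            Min ((\<lambda>k. if t \<le> l (nat (int n + int (cnt p S t) - int (card S)) + k)
                                 (n + m - card S - cnt p ({1..m} - S) t + k) then 1 else 0)
                 ` {0..cnt p ({1..m} - S) t}))
       \<and> (\<forall>n t. n \<le> m \<longrightarrow> 0 \<le> t \<longrightarrow> t \<le> 1 \<longrightarrow>
            phiSn m p l {1..m} n t =
            (if t \<le> l (nat (int n + int (cnt p {1..m} t) - int m)) n then 1 else 0))"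
proof (intro conjI allI impI)
  fix S n t
  assume S: "S \<subseteq> {1..m}" and n: "n \<le> card S"
  show "phiSn m p l S n t =
            Min ((\<lambda>k. if t \<le> l (nat (int n + int (cnt p S t) - int (card S)) + k)
                                 (n + m - card S - cnt p ({1..m} - S) t + k) then 1 else 0)
                 ` {0..cnt p ({1..m} - S) t})"
    by (rule phiSn_eq_Min_table[OF mono_n mono_i S n])
next
  fix n t
  assume "n \<le> m"
  then show "phiSn m p l {1..m} n t =
            (if t \<le> l (nat (int n + int (cnt p {1..m} t) - int m)) n then 1 else 0)"
    using phiSn_eq_Min_table[OF mono_n mono_i order.refl] by (simp add: cnt_def)
qed

end
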